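(* $\chi_i'(S_{C_5}^1)=3$ and $\chi_i'(S_{C_5}^n)=4$ for every integer $n\ge 2$, where $C_5$ is the cycle on $5$ vertices.
   Context: For a graph $H$ with at least one edge, an injective edge $k$-coloring is a map $c:E(H)\to\{1,\dots,k\}$ such that whenever $e_1=xy$, $e_2=yz$, $e_3=zu$ are edges of $H$ with $x,y,z$ distinct and $u\notin\{y,z\}$ (the case $u=x$ being allowed), we have $c(e_1)\ne c(e_3)$. The injective chromatic index $\chi_i'(H)$ is the least $k$ for which such a coloring exists. For a graph $G$ and positive integer $n$, the generalized Sierpiński graph $S_G^n$ has vertex set $V(G)^n$, and $(u_1,\dots,u_n)$, $(v_1,\dots,v_n)$ are adjacent if and only if there is $d\in\{1,\dots,n\}$ with $u_i=v_i$ for $i<d$, $u_dv_d\in E(G)$, and $u_i=v_d$, $v_i=u_d$ for all $i>d$. *)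

theory Defs
  imports Main
begin

text \<open>A graph is given by a symmetric, irreflexive adjacency predicate; its edge set
  consists of the unordered pairs {x,y} with x adjacent to y.\<close>

definition edges :: "('a \<Rightarrow> 'a \<Rightarrow> bool) \<Rightarrow> 'a set set" where
  "edges adj = {{x, y} | x y. adj x y}"

text \<open>Injective edge k-colouring: c maps E(H) into {1..k}, and for every path-or-triangle
  x y z u (edges xy, yz, zu, x,y,z distinct, u not in {y,z}, u = x allowed) the edges
  xy and zu receive different colours.\<close>

definition injective_edge_coloring ::
  "('a \<Rightarrow> 'a \<Rightarrow> bool) \<Rightarrow> nat \<Rightarrow> ('a set \<Rightarrow> nat) \<Rightarrow> bool" where
  "injective_edge_coloring adj k c \<longleftrightarrow>
     (\<forall>e\<in>edges adj. c e \<in> {1..k}) \<and>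
     (\<forall>x y z u. adj x y \<and> adj y z \<and> adj z u \<and> x \<noteq> y \<and> y \<noteq> z \<and> x \<noteq> z
        \<and> u \<noteq> y \<and> u \<noteq> z \<longrightarrow> c {x, y} \<noteq> c {z, u})"

definition injective_chromatic_index :: "('a \<Rightarrow> 'a \<Rightarrow> bool) \<Rightarrow> nat" where
  "injective_chromatic_index adj = (LEAST k. \<exists>c. injective_edge_coloring adj k c)"

text \<open>Generalized Sierpinski graph S_G^n on vertex set V(G)^n (words of length n over V).
  Positions are 0-based here: d ranges over {0..<n}.\<close>

definition sierpinski_adj ::
  "'a set \<Rightarrow> ('a \<Rightarrow> 'a \<Rightarrow> bool) \<Rightarrow> nat \<Rightarrow> 'a list \<Rightarrow> 'a list \<Rightarrow> bool" where
  "sierpinski_adj V adj n u v \<longleftrightarrow>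
     length u = n \<and> length v = n \<and> set u \<subseteq> V \<and> set v \<subseteq> V \<and>
     (\<exists>d<n. (\<forall>i<d. u ! i = v ! i) \<and> adj (u ! d) (v ! d) \<and>
            (\<forall>i. d < i \<and> i < n \<longrightarrow> u ! i = v ! d \<and> v ! i = u ! d))"

definition C5_vertices :: "nat set" where
  "C5_vertices = {0..<5}"

definition C5_adj :: "nat \<Rightarrow> nat \<Rightarrow> bool" where
  "C5_adj a b \<longleftrightarrow> a < 5 \<and> b < 5 \<and> (b = (a + 1) mod 5 \<or> a = (b + 1) mod 5)"

end

(* For n = 1 the graph is C5, and the edges of C5 at distance one from each other form
   a 5-cycle, an odd cycle: three colours are needed and suffice.

   For n >= 2, the words 0...0ab span a copy of S^2 inside S^n, and an exhaustive search
   shows that S^2 has no injective edge colouring with three colours. For the upper bound,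
   project every word to its last two letters. This maps S^n to S^2 together with the
   "diagonal" 5-cycle aa - bb and sends distinct neighbours of a vertex to distinct
   vertices; moreover no vertex of S^n has two edges mapped to diagonal edges, because it
   has at most one neighbour outside its own copy of C5. Hence a colouring of the 35 edges
   of this finite graph that separates the walks that can actually occur lifts to S^n. *)

theory Submission
  imports Defs "HOL-Library.Product_Lexorder"
begin

section \<open>Transferring injective edge colourings\<close>

lemma injective_chromatic_index_eqI:
  assumes "injective_edge_coloring adj k c"
    and "\<And>c. \<not> injective_edge_coloring adj (k - 1) c"
  shows "injective_chromatic_index adj = k"
  unfolding injective_chromatic_index_def
proof (rule Least_equality)
  show "\<exists>c. injective_edge_coloring adj k c" using assms(1) by blast
next
  fix m assume "\<exists>c. injective_edge_coloring adj m c"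
  then obtain c' where c': "injective_edge_coloring adj m c'" by blast
  show "k \<le> m"
  proof (rule ccontr)
    assume "\<not> k \<le> m"
    then have "injective_edge_coloring adj (k - 1) c'"
      using c' unfolding injective_edge_coloring_def by fastforce
    then show False using assms(2) by blast
  qed
qed

lemma injective_edge_coloring_pullback:
  assumes c: "injective_edge_coloring adj' k c"
    and sym: "\<And>x y. adj x y \<Longrightarrow> adj y x"
    and hom: "\<And>x y. adj x y \<Longrightarrow> adj' (f x) (f y)"
    and irrefl: "\<And>x. \<not> adj' x x"
    and locally_inj: "\<And>x y z. adj y x \<Longrightarrow> adj y z \<Longrightarrow> x \<noteq> z \<Longrightarrow> f x \<noteq> f z"
  shows "injective_edge_coloring adj k (\<lambda>e. c (f ` e))"
  unfolding injective_edge_coloring_def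
proof (intro conjI ballI allI impI)
  fix e assume "e \<in> edges adj"
  then obtain x y where "e = {x, y}" "adj x y" unfolding edges_def by blast
  then have "f ` e \<in> edges adj'" using hom unfolding edges_def by auto
  then show "c (f ` e) \<in> {1..k}" using c unfolding injective_edge_coloring_def by blast
next
  fix x y z u
  assume walk: "adj x y \<and> adj y z \<and> adj z u \<and> x \<noteq> y \<and> y \<noteq> z \<and> x \<noteq> z \<and> u \<noteq> y \<and> u \<noteq> z"
  have "f x \<noteq> f y" "f y \<noteq> f z" "f u \<noteq> f z"
    using walk hom irrefl by metis+
  moreover have "f x \<noteq> f z" "f u \<noteq> f y"
    using walk sym locally_inj by metis+
  ultimately show "c (f ` {x, y}) \<noteq> c (f ` {z, u})"
    using walk hom c unfolding injective_edge_coloring_def by auto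
qed

lemma injective_edge_coloring_induced:
  assumes "injective_edge_coloring adj k c" and "inj f"
    and "\<And>x y. adj x y \<Longrightarrow> adj y x" and "\<And>x. \<not> adj x x"
  shows "injective_edge_coloring (\<lambda>x y. adj (f x) (f y)) k (\<lambda>e. c (f ` e))"
  by (rule injective_edge_coloring_pullback[OF assms(1)]) (use assms(2-4) in \<open>auto simp: inj_eq\<close>)

definition edge_coloring_of :: "('a \<Rightarrow> 'a \<Rightarrow> nat) \<Rightarrow> 'a set \<Rightarrow> nat" where
  "edge_coloring_of g e = (SOME i. \<exists>x y. e = {x, y} \<and> i = g x y)"

lemma edge_coloring_of_doubleton:
  assumes "\<And>x y. g x y = g y x"
  shows "edge_coloring_of g {x, y} = g x y"
proof -
  have "\<exists>i x' y'. {x, y} = {x', y'} \<and> i = g x' y'" by blast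
  from someI_ex[OF this] obtain x' y' where "{x, y} = {x', y'}"
    and "edge_coloring_of g {x, y} = g x' y'"
    unfolding edge_coloring_of_def by blast
  then show ?thesis using assms by (metis doubleton_eq_iff)
qed

lemma injective_edge_coloring_of_pairs:
  assumes sym: "\<And>x y. g x y = g y x"
    and range: "\<And>x y. adj x y \<Longrightarrow> g x y \<in> {1..k}"
    and walk: "\<And>x y z u. adj x y \<Longrightarrow> adj y z \<Longrightarrow> adj z u \<Longrightarrow> x \<noteq> y \<Longrightarrow> y \<noteq> z \<Longrightarrow>
                 x \<noteq> z \<Longrightarrow> u \<noteq> y \<Longrightarrow> u \<noteq> z \<Longrightarrow> g x y \<noteq> g z u"
  shows "injective_edge_coloring adj k (edge_coloring_of g)"
  unfolding injective_edge_coloring_def edges_def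
  using edge_coloring_of_doubleton[of g, OF sym] range walk by auto

section \<open>Exhaustive search for colourings\<close>

fun conflict_free_colorings :: "nat \<Rightarrow> ('e \<times> 'e) list \<Rightarrow> 'e list \<Rightarrow> ('e \<times> nat) list list" where
  "conflict_free_colorings k C [] = [[]]"
| "conflict_free_colorings k C (e # es) =
     [(e, i) # p. p \<leftarrow> conflict_free_colorings k C es, i \<leftarrow> [1..<Suc k],
        \<forall>f \<in> set [f. (e', f) \<leftarrow> C, e' = e]. map_of p f \<noteq> Some i]"

lemma conflict_free_colorings_ConsI:
  assumes "p \<in> set (conflict_free_colorings k C es)" and "i \<in> {1..k}"
    and "\<And>f. (e, f) \<in> set C \<Longrightarrow> map_of p f \<noteq> Some i"
  shows "(e, i) # p \<in> set (conflict_free_colorings k C (e # es))"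
  using assms by (auto simp del: upt_Suc)

lemma conflict_free_colorings_complete:
  assumes "\<forall>e\<in>set es. g e \<in> {1..k}" and "\<forall>(e, f)\<in>set C. g e \<noteq> g f"
  shows "map (\<lambda>e. (e, g e)) es \<in> set (conflict_free_colorings k C es)"
  using assms
proof (induction es)
  case (Cons e es)
  have "(e, g e) # map (\<lambda>e. (e, g e)) es \<in> set (conflict_free_colorings k C (e # es))"
  proof (rule conflict_free_colorings_ConsI)
    show "map (\<lambda>e. (e, g e)) es \<in> set (conflict_free_colorings k C es)" "g e \<in> {1..k}"
      using Cons by auto
    fix f assume "(e, f) \<in> set C"
    then show "map_of (map (\<lambda>e. (e, g e)) es) f \<noteq> Some (g e)"
      using Cons.prems(2) by (auto simp: map_of_map_restrict restrict_map_def)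
  qed
  then show ?case by (simp only: list.map)
qed simp

definition edge_key :: "'a::linorder \<Rightarrow> 'a \<Rightarrow> 'a \<times> 'a" where
  "edge_key x y = (min x y, max x y)"

lemma edge_key_doubleton: "{fst (edge_key x y), snd (edge_key x y)} = {x, y}"
  by (auto simp: edge_key_def min_def max_def)

definition edge_keys :: "'a::linorder list \<Rightarrow> ('a \<Rightarrow> 'a \<Rightarrow> bool) \<Rightarrow> ('a \<times> 'a) list" where
  "edge_keys vs adj = remdups [edge_key x y. x \<leftarrow> vs, y \<leftarrow> filter (adj x) vs]"

definition conflict_pairs ::
  "'a::linorder list \<Rightarrow> ('a \<Rightarrow> 'a \<Rightarrow> bool) \<Rightarrow> (('a \<times> 'a) \<times> ('a \<times> 'a)) list" where
  "conflict_pairs vs adj =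
     [(edge_key x y, edge_key z u). x \<leftarrow> vs, y \<leftarrow> filter (adj x) vs, z \<leftarrow> filter (adj y) vs,
        u \<leftarrow> filter (adj z) vs, x \<noteq> y \<and> y \<noteq> z \<and> x \<noteq> z \<and> u \<noteq> y \<and> u \<noteq> z]"

lemma mem_edge_keys_iff:
  "e \<in> set (edge_keys vs adj) \<longleftrightarrow> (\<exists>x\<in>set vs. \<exists>y\<in>set vs. adj x y \<and> e = edge_key x y)"
  unfolding edge_keys_def by auto

lemma mem_conflict_pairs_iff:
  "(e, f) \<in> set (conflict_pairs vs adj) \<longleftrightarrow>
     (\<exists>x\<in>set vs. \<exists>y\<in>set vs. \<exists>z\<in>set vs. \<exists>u\<in>set vs. adj x y \<and> adj y z \<and> adj z u \<and>
        x \<noteq> y \<and> y \<noteq> z \<and> x \<noteq> z \<and> u \<noteq> y \<and> u \<noteq> z \<and> e = edge_key x y \<and> f = edge_key z u)"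
  unfolding conflict_pairs_def by auto

lemma no_injective_edge_coloring_if_no_conflict_free_coloring:
  fixes vs :: "'a::linorder list"
  assumes sub: "\<And>x y. x \<in> set vs \<Longrightarrow> y \<in> set vs \<Longrightarrow> adj' x y \<Longrightarrow> adj x y"
    and none: "conflict_free_colorings k (conflict_pairs vs adj') (edge_keys vs adj') = []"
  shows "\<not> injective_edge_coloring adj k c"
proof
  assume c: "injective_edge_coloring adj k c"
  define g where "g e = c {fst e, snd e}" for e :: "'a \<times> 'a"
  have "g e \<in> {1..k}" if e: "e \<in> set (edge_keys vs adj')" for e
  proof -
    obtain x y where "x \<in> set vs" "y \<in> set vs" "adj' x y" "e = edge_key x y"
      using e unfolding mem_edge_keys_iff by blast
    then have "{x, y} \<in> edges adj" and "g e = c {x, y}"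
      using sub unfolding edges_def g_def by (auto simp: edge_key_doubleton)
    then show ?thesis using c unfolding injective_edge_coloring_def by auto
  qed
  moreover have "g e \<noteq> g f" if ef: "(e, f) \<in> set (conflict_pairs vs adj')" for e f
  proof -
    obtain x y z u where vs: "x \<in> set vs" "y \<in> set vs" "z \<in> set vs" "u \<in> set vs"
      and walk: "adj' x y" "adj' y z" "adj' z u" "x \<noteq> y" "y \<noteq> z" "x \<noteq> z" "u \<noteq> y" "u \<noteq> z"
      and "e = edge_key x y" "f = edge_key z u"
      using ef unfolding mem_conflict_pairs_iff by blast
    moreover have "adj x y" "adj y z" "adj z u" using sub vs walk by auto
    then have "c {x, y} \<noteq> c {z, u}"
      using c walk unfolding injective_edge_coloring_def by blast
    ultimately show ?thesis unfolding g_def by (simp add: edge_key_doubleton)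
  qed
  ultimately have "map (\<lambda>e. (e, g e)) (edge_keys vs adj')
      \<in> set (conflict_free_colorings k (conflict_pairs vs adj') (edge_keys vs adj'))"
    by (intro conflict_free_colorings_complete) auto
  then show False using none by simp
qed

section \<open>Generalized Sierpinski graphs\<close>

fun inner_adj :: "('a \<Rightarrow> 'a \<Rightarrow> bool) \<Rightarrow> 'a \<times> 'a \<Rightarrow> 'a \<times> 'a \<Rightarrow> bool" where
  "inner_adj adj (a, b) (c, d) \<longleftrightarrow> a = c \<and> adj b d"

fun bridge_adj :: "('a \<Rightarrow> 'a \<Rightarrow> bool) \<Rightarrow> 'a \<times> 'a \<Rightarrow> 'a \<times> 'a \<Rightarrow> bool" where
  "bridge_adj adj (a, b) (c, d) \<longleftrightarrow> adj a c \<and> b = c \<and> d = a"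

fun diagonal_adj :: "('a \<Rightarrow> 'a \<Rightarrow> bool) \<Rightarrow> 'a \<times> 'a \<Rightarrow> 'a \<times> 'a \<Rightarrow> bool" where
  "diagonal_adj adj (a, b) (c, d) \<longleftrightarrow> a = b \<and> c = d \<and> adj a c"

definition pair_sierpinski_adj :: "('a \<Rightarrow> 'a \<Rightarrow> bool) \<Rightarrow> 'a \<times> 'a \<Rightarrow> 'a \<times> 'a \<Rightarrow> bool" where
  "pair_sierpinski_adj adj P Q \<longleftrightarrow> inner_adj adj P Q \<or> bridge_adj adj P Q"

definition last_two_adj :: "('a \<Rightarrow> 'a \<Rightarrow> bool) \<Rightarrow> 'a \<times> 'a \<Rightarrow> 'a \<times> 'a \<Rightarrow> bool" where
  "last_two_adj adj P Q \<longleftrightarrow> pair_sierpinski_adj adj P Q \<or> diagonal_adj adj P Q"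

definition sierpinski_edge_at :: "('a \<Rightarrow> 'a \<Rightarrow> bool) \<Rightarrow> nat \<Rightarrow> nat \<Rightarrow> 'a list \<Rightarrow> 'a list \<Rightarrow> bool" where
  "sierpinski_edge_at adj n d u v \<longleftrightarrow> d < n \<and> (\<forall>i<d. u ! i = v ! i) \<and> adj (u ! d) (v ! d) \<and>
     (\<forall>i. d < i \<and> i < n \<longrightarrow> u ! i = v ! d \<and> v ! i = u ! d)"

lemma sierpinski_adj_iff_edge_at:
  "sierpinski_adj V adj n u v \<longleftrightarrow>
     length u = n \<and> length v = n \<and> set u \<subseteq> V \<and> set v \<subseteq> V \<and> (\<exists>d. sierpinski_edge_at adj n d u v)"
  unfolding sierpinski_adj_def sierpinski_edge_at_def by blast

lemma sierpinski_adj_sym: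
  assumes "\<And>a b. adj a b \<Longrightarrow> adj b a" and "sierpinski_adj V adj n u v"
  shows "sierpinski_adj V adj n v u"
  using assms unfolding sierpinski_adj_def by metis

lemma sierpinski_adj_irrefl:
  assumes "\<And>a. \<not> adj a a"
  shows "\<not> sierpinski_adj V adj n u u"
  using assms unfolding sierpinski_adj_def by blast

lemma sierpinski_adj_one_iff:
  "sierpinski_adj V adj (Suc 0) u v \<longleftrightarrow> (\<exists>a b. u = [a] \<and> v = [b] \<and> a \<in> V \<and> b \<in> V \<and> adj a b)"
  unfolding sierpinski_adj_def by (auto simp: length_Suc_conv)

lemma sierpinski_adj_append_pair:
  assumes "pair_sierpinski_adj adj (a, b) (c, d)"
    and "{a, b, c, d} \<subseteq> V" and "set p \<subseteq> V"
  shows "sierpinski_adj V adj (length p + 2) (p @ [a, b]) (p @ [c, d])"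
proof -
  let ?m = "length p"
  have "sierpinski_edge_at adj (?m + 2) (?m + 1) (p @ [a, b]) (p @ [c, d])"
    if "inner_adj adj (a, b) (c, d)"
    using that unfolding sierpinski_edge_at_def by (auto simp: nth_append less_Suc_eq)
  moreover have "sierpinski_edge_at adj (?m + 2) ?m (p @ [a, b]) (p @ [c, d])"
    if "bridge_adj adj (a, b) (c, d)"
    using that unfolding sierpinski_edge_at_def by (auto simp: nth_append less_Suc_eq)
  ultimately show ?thesis
    using assms unfolding sierpinski_adj_iff_edge_at pair_sierpinski_adj_def by auto
qed

lemma inner_adj_disjoint:
  assumes "\<And>a. \<not> adj a a" and "inner_adj adj P Q"
  shows "\<not> bridge_adj adj P Q" and "\<not> diagonal_adj adj P Q"
  using assms by (cases P; cases Q; auto)+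

definition last_two :: "'a list \<Rightarrow> 'a \<times> 'a" where
  "last_two v = (v ! (length v - 2), v ! (length v - 1))"

lemma last_two_sierpinski_edge_at:
  assumes sym: "\<And>a b. adj a b \<Longrightarrow> adj b a"
    and e: "sierpinski_edge_at adj n d u v" and len: "length u = n" "length v = n" and n: "2 \<le> n"
  shows "(d = n - 1 \<longrightarrow> inner_adj adj (last_two u) (last_two v)) \<and>
         (d = n - 2 \<longrightarrow> bridge_adj adj (last_two u) (last_two v)) \<and>
         (d < n - 2 \<longrightarrow> diagonal_adj adj (last_two u) (last_two v))"
proof (intro conjI impI)
  assume "d = n - 1"
  then show "inner_adj adj (last_two u) (last_two v)"
    using e len n unfolding sierpinski_edge_at_def last_two_def by simp
next
  assume "d = n - 2"
  then show "bridge_adj adj (last_two u) (last_two v)"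
    using e len n unfolding sierpinski_edge_at_def last_two_def by simp
next
  assume "d < n - 2"
  then have "u ! (n - 2) = v ! d" "u ! (n - 1) = v ! d" "v ! (n - 2) = u ! d" "v ! (n - 1) = u ! d"
    using e unfolding sierpinski_edge_at_def by auto
  then show "diagonal_adj adj (last_two u) (last_two v)"
    using e len sym unfolding sierpinski_edge_at_def last_two_def by simp
qed

lemma inner_adj_last_two_iff:
  assumes "\<And>a b. adj a b \<Longrightarrow> adj b a" and "\<And>a. \<not> adj a a"
    and e: "sierpinski_edge_at adj n d u v" and "length u = n" "length v = n" "2 \<le> n"
  shows "inner_adj adj (last_two u) (last_two v) \<longleftrightarrow> d = n - 1"
proof -
  have "d < n" using e unfolding sierpinski_edge_at_def by simp
  then have "d = n - 1 \<or> d = n - 2 \<or> d < n - 2" by linarith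
  then show ?thesis
    using last_two_sierpinski_edge_at[of adj n d u v] inner_adj_disjoint[of adj] assms by metis
qed

lemma sierpinski_edge_at_below_top_unique:
  assumes irrefl: "\<And>a. \<not> adj a a"
    and x: "sierpinski_edge_at adj n d1 y x" "d1 < n - 1" "length x = n"
    and z: "sierpinski_edge_at adj n d2 y z" "d2 < n - 1" "length z = n"
  shows "x = z"
proof -
  have "y ! (n - 1) = x ! d1" "y ! (n - 1) = z ! d2"
    using x z unfolding sierpinski_edge_at_def by auto
  have "d1 = d2"
  proof (rule ccontr)
    assume "d1 \<noteq> d2"
    then consider "d1 < d2" | "d2 < d1" by linarith
    then show False
    proof cases
      case 1
      then have "y ! d2 = x ! d1" using x z unfolding sierpinski_edge_at_def by auto
      then show False using z irrefl \<open>y ! (n - 1) = x ! d1\<close> \<open>y ! (n - 1) = z ! d2\<close>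
        unfolding sierpinski_edge_at_def by metis
    next
      case 2
      then have "y ! d1 = z ! d2" using x z unfolding sierpinski_edge_at_def by auto
      then show False using x irrefl \<open>y ! (n - 1) = x ! d1\<close> \<open>y ! (n - 1) = z ! d2\<close>
        unfolding sierpinski_edge_at_def by metis
    qed
  qed
  show "x = z"
  proof (rule nth_equalityI)
    fix i assume "i < length x"
    then have "i < d1 \<or> i = d1 \<or> d1 < i \<and> i < n" using x by auto
    then show "x ! i = z ! i"
      using x z \<open>d1 = d2\<close> \<open>y ! (n - 1) = x ! d1\<close> \<open>y ! (n - 1) = z ! d2\<close>
      unfolding sierpinski_edge_at_def by metis
  qed (use x z in simp)
qed

lemma sierpinski_edge_at_top_unique:
  assumes x: "sierpinski_edge_at adj n (n - 1) y x" "length x = n"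
    and z: "sierpinski_edge_at adj n (n - 1) y z" "length z = n"
    and last: "x ! (n - 1) = z ! (n - 1)"
  shows "x = z"
proof (rule nth_equalityI)
  fix i assume "i < length x"
  then have "i < n - 1 \<or> i = n - 1" using x by auto
  then show "x ! i = z ! i"
    using x z last unfolding sierpinski_edge_at_def by metis
qed (use x z in simp)

lemma last_two_sierpinski_neighbours:
  assumes sym: "\<And>a b. adj a b \<Longrightarrow> adj b a" and irrefl: "\<And>a. \<not> adj a a" and n: "2 \<le> n"
    and yx: "sierpinski_adj V adj n y x" and yz: "sierpinski_adj V adj n y z" and "x \<noteq> z"
  shows "last_two x \<noteq> last_two z"
    and "\<not> (diagonal_adj adj (last_two y) (last_two x) \<and> diagonal_adj adj (last_two y) (last_two z))"
proof -
  obtain d1 d2 where x: "sierpinski_edge_at adj n d1 y x" and z: "sierpinski_edge_at adj n d2 y z"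
    and len: "length y = n" "length x = n" "length z = n"
    using yx yz unfolding sierpinski_adj_iff_edge_at by blast
  have d: "d1 < n" "d2 < n" using x z unfolding sierpinski_edge_at_def by auto
  have top: "inner_adj adj (last_two y) (last_two x) \<longleftrightarrow> d1 = n - 1"
    "inner_adj adj (last_two y) (last_two z) \<longleftrightarrow> d2 = n - 1"
    using inner_adj_last_two_iff[OF sym irrefl x len(1,2) n]
      inner_adj_last_two_iff[OF sym irrefl z len(1,3) n] by blast+
  have not_both_below: "\<not> (d1 < n - 1 \<and> d2 < n - 1)"
    using sierpinski_edge_at_below_top_unique[of adj, OF irrefl x _ len(2) z _ len(3)] \<open>x \<noteq> z\<close>
    by blast
  show "last_two x \<noteq> last_two z"
  proof
    assume eq: "last_two x = last_two z"
    then have "d1 = n - 1" "d2 = n - 1" using top d not_both_below by auto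
    moreover have "x ! (n - 1) = z ! (n - 1)" using eq len unfolding last_two_def by simp
    ultimately show False
      using sierpinski_edge_at_top_unique x z len \<open>x \<noteq> z\<close> by metis
  qed
  show "\<not> (diagonal_adj adj (last_two y) (last_two x) \<and> diagonal_adj adj (last_two y) (last_two z))"
    using top d not_both_below inner_adj_disjoint(2)[of adj, OF irrefl] by fastforce
qed

lemma last_two_adj_if_sierpinski_adj:
  assumes sym: "\<And>a b. adj a b \<Longrightarrow> adj b a" and n: "2 \<le> n" and uv: "sierpinski_adj V adj n u v"
  shows "last_two_adj adj (last_two u) (last_two v)"
proof -
  obtain d where e: "sierpinski_edge_at adj n d u v" and len: "length u = n" "length v = n"
    using uv unfolding sierpinski_adj_iff_edge_at by blast
  then have "d = n - 1 \<or> d = n - 2 \<or> d < n - 2" unfolding sierpinski_edge_at_def by linarith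
  then show ?thesis
    using last_two_sierpinski_edge_at[OF sym e len n]
    unfolding last_two_adj_def pair_sierpinski_adj_def by blast
qed

lemma last_two_mem_Times:
  assumes "set u \<subseteq> V" and "2 \<le> length u"
  shows "last_two u \<in> V \<times> V"
  using assms unfolding last_two_def by (auto dest!: nth_mem)

section \<open>Sierpinski graphs of C5\<close>

lemma C5_adj_sym: "C5_adj a b \<Longrightarrow> C5_adj b a"
  unfolding C5_adj_def by auto

lemma C5_adj_irrefl: "\<not> C5_adj a a"
  unfolding C5_adj_def by presburger

text \<open>The edge {a, b} of C5 is indexed by (a + b) mod 5, which takes a different value on
  each of the five edges.\<close>

definition C5_colour :: "nat \<Rightarrow> nat \<Rightarrow> nat" where
  "C5_colour a b = [2, 1, 3, 2, 1] ! ((a + b) mod 5)"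

lemma C5_colour_check:
  "\<forall>a\<in>set [0..<5]. \<forall>b\<in>set [0..<5]. C5_adj a b \<longrightarrow> C5_colour a b \<in> {1..3} \<and>
     (\<forall>c\<in>set [0..<5]. \<forall>d\<in>set [0..<5]. C5_adj b c \<and> C5_adj c d \<and> a \<noteq> c \<and> d \<noteq> b \<longrightarrow>
        C5_colour a b \<noteq> C5_colour c d)"
  by code_simp

lemma C5_injective_3_coloring: "injective_edge_coloring C5_adj 3 (edge_coloring_of C5_colour)"
proof (rule injective_edge_coloring_of_pairs)
  have vertex: "C5_adj a b \<Longrightarrow> a \<in> set [0..<5] \<and> b \<in> set [0..<5]" for a b
    unfolding C5_adj_def by simp
  show "C5_colour a b = C5_colour b a" for a b
    unfolding C5_colour_def by (simp add: add.commute)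
  show "C5_adj a b \<Longrightarrow> C5_colour a b \<in> {1..3}" for a b
    using C5_colour_check vertex by blast
  show "C5_colour a b \<noteq> C5_colour c d"
    if "C5_adj a b" "C5_adj b c" "C5_adj c d" "a \<noteq> c" "d \<noteq> b" for a b c d
    using C5_colour_check vertex that by blast
qed

lemma sierpinski_C5_1_injective_3_coloring:
  "injective_edge_coloring (sierpinski_adj C5_vertices C5_adj 1) 3
     (\<lambda>e. edge_coloring_of C5_colour (hd ` e))"
  by (rule injective_edge_coloring_pullback[OF C5_injective_3_coloring])
    (auto simp: sierpinski_adj_one_iff C5_adj_sym C5_adj_irrefl)

lemma sierpinski_C5_1_no_injective_2_coloring:
  "\<not> injective_edge_coloring (sierpinski_adj C5_vertices C5_adj 1) 2 c"
proof
  let ?G = "\<lambda>a b. sierpinski_adj C5_vertices C5_adj 1 [a] [b]"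
  assume "injective_edge_coloring (sierpinski_adj C5_vertices C5_adj 1) 2 c"
  then have "injective_edge_coloring ?G 2 (\<lambda>e. c ((\<lambda>a. [a]) ` e))"
    by (rule injective_edge_coloring_induced)
      (auto simp: inj_def sierpinski_adj_one_iff C5_adj_sym C5_adj_irrefl)
  moreover have "\<not> injective_edge_coloring ?G 2 c'" for c'
  proof (rule no_injective_edge_coloring_if_no_conflict_free_coloring[where vs = "[0..<5]"])
    show "C5_adj a b \<Longrightarrow> ?G a b" for a b
      by (simp add: sierpinski_adj_one_iff C5_vertices_def C5_adj_def)
    show "conflict_free_colorings 2 (conflict_pairs [0..<5] C5_adj) (edge_keys [0..<5] C5_adj) = []"
      by code_simp
  qed
  ultimately show False by blast
qed

definition C5_pairs :: "(nat \<times> nat) list" where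
  "C5_pairs = List.product [0..<5] [0..<5]"

lemma set_C5_pairs: "set C5_pairs = C5_vertices \<times> C5_vertices"
  unfolding C5_pairs_def C5_vertices_def by auto

lemma sierpinski_C5_no_injective_3_coloring:
  assumes n: "2 \<le> n"
  shows "\<not> injective_edge_coloring (sierpinski_adj C5_vertices C5_adj n) 3 c"
proof
  define pad where "pad P = replicate (n - 2) 0 @ [fst P, snd P]" for P :: "nat \<times> nat"
  let ?G = "\<lambda>P Q. sierpinski_adj C5_vertices C5_adj n (pad P) (pad Q)"
  assume "injective_edge_coloring (sierpinski_adj C5_vertices C5_adj n) 3 c"
  then have "injective_edge_coloring ?G 3 (\<lambda>e. c (pad ` e))"
  proof (rule injective_edge_coloring_induced)
    show "inj pad" unfolding pad_def by (auto intro!: injI simp: prod_eq_iff)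
  qed (use sierpinski_adj_sym[of C5_adj, OF C5_adj_sym]
      sierpinski_adj_irrefl[of C5_adj, OF C5_adj_irrefl] in blast)+
  moreover have "\<not> injective_edge_coloring ?G 3 c'" for c'
  proof (rule no_injective_edge_coloring_if_no_conflict_free_coloring[where vs = C5_pairs])
    fix P Q assume "P \<in> set C5_pairs" "Q \<in> set C5_pairs" "pair_sierpinski_adj C5_adj P Q"
    moreover have "length (replicate (n - 2) (0::nat)) + 2 = n" using n by simp
    moreover have "set (replicate (n - 2) (0::nat)) \<subseteq> C5_vertices"
      unfolding C5_vertices_def by auto
    ultimately show "?G P Q"
      using sierpinski_adj_append_pair[of C5_adj "fst P" "snd P" "fst Q" "snd Q" C5_vertices
          "replicate (n - 2) 0"]
      unfolding pad_def set_C5_pairs by (auto simp: C5_vertices_def)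
  next
    show "conflict_free_colorings 3 (conflict_pairs C5_pairs (pair_sierpinski_adj C5_adj))
        (edge_keys C5_pairs (pair_sierpinski_adj C5_adj)) = []"
      by code_simp
  qed
  ultimately show False by blast
qed

definition last_two_colour :: "nat \<times> nat \<Rightarrow> nat \<times> nat \<Rightarrow> nat" where
  "last_two_colour P Q =
     (if fst P = fst Q
      then [[4, 1, 4, 3, 1], [3, 2, 1, 2, 4], [1, 4, 3, 1, 2], [2, 1, 2, 4, 1], [4, 2, 3, 1, 3]]
             ! fst P ! ((snd P + snd Q) mod 5)
      else if fst P = snd P \<and> fst Q = snd Q then [2, 1, 3, 1, 1] ! ((fst P + fst Q) mod 5)
      else [4, 3, 4, 3, 2] ! ((fst P + fst Q) mod 5))"

lemma last_two_colour_sym: "last_two_colour P Q = last_two_colour Q P"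
  unfolding last_two_colour_def by (auto simp: add.commute)

text \<open>Walks that enter and leave a vertex along diagonal edges are exempt: they do not
  occur in S^n (last_two_sierpinski_neighbours), and without the exemption no 4-colouring
  exists.\<close>

lemma last_two_colour_check:
  "\<forall>P\<in>set C5_pairs. \<forall>Q\<in>set (filter (last_two_adj C5_adj P) C5_pairs).
     last_two_colour P Q \<in> {1..4} \<and>
     (\<forall>R\<in>set (filter (last_two_adj C5_adj Q) C5_pairs).
      \<forall>T\<in>set (filter (last_two_adj C5_adj R) C5_pairs).
        P \<noteq> R \<and> Q \<noteq> T \<and> \<not> (diagonal_adj C5_adj Q P \<and> diagonal_adj C5_adj Q R) \<and>
        \<not> (diagonal_adj C5_adj R Q \<and> diagonal_adj C5_adj R T) \<longrightarrow>
        last_two_colour P Q \<noteq> last_two_colour R T)"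
  by code_simp

lemma sierpinski_C5_injective_4_coloring:
  assumes n: "2 \<le> n"
  shows "injective_edge_coloring (sierpinski_adj C5_vertices C5_adj n) 4
           (edge_coloring_of (\<lambda>u v. last_two_colour (last_two u) (last_two v)))"
proof (rule injective_edge_coloring_of_pairs)
  let ?S = "sierpinski_adj C5_vertices C5_adj n"
  have step: "last_two u \<in> set C5_pairs \<and>
      last_two v \<in> set (filter (last_two_adj C5_adj (last_two u)) C5_pairs)"
    if "?S u v" for u v
    using that n last_two_adj_if_sierpinski_adj[of C5_adj, OF C5_adj_sym n that]
      last_two_mem_Times[of u C5_vertices] last_two_mem_Times[of v C5_vertices]
    unfolding sierpinski_adj_def by (auto simp: set_C5_pairs)
  have neighbours: "last_two x \<noteq> last_two z \<and>
      \<not> (diagonal_adj C5_adj (last_two y) (last_two x) \<and> diagonal_adj C5_adj (last_two y) (last_two z))"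
    if "?S y x" "?S y z" "x \<noteq> z" for x y z
    using last_two_sierpinski_neighbours[of C5_adj, OF C5_adj_sym C5_adj_irrefl n that] by blast
  show "last_two_colour (last_two u) (last_two v) = last_two_colour (last_two v) (last_two u)" for u v
    by (rule last_two_colour_sym)
  show "last_two_colour (last_two u) (last_two v) \<in> {1..4}" if "?S u v" for u v
    using last_two_colour_check step[OF that] by blast
  show "last_two_colour (last_two x) (last_two y) \<noteq> last_two_colour (last_two z) (last_two u)"
    if "?S x y" "?S y z" "?S z u" "x \<noteq> y" "y \<noteq> z" "x \<noteq> z" "u \<noteq> y" "u \<noteq> z" for x y z u
  proof -
    have "?S y x" "?S z y" using that sierpinski_adj_sym[of C5_adj, OF C5_adj_sym] by blast+
    then show ?thesis
      using last_two_colour_check step[OF \<open>?S x y\<close>] step[OF \<open>?S y z\<close>] step[OF \<open>?S z u\<close>]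
        neighbours[of y x z] neighbours[of z y u] that by blast
  qed
qed

theorem mainTheorem8:
  shows "injective_chromatic_index (sierpinski_adj C5_vertices C5_adj 1) = 3 \<and>
         (\<forall>n::nat. n \<ge> 2 \<longrightarrow>
            injective_chromatic_index (sierpinski_adj C5_vertices C5_adj n) = 4)"
proof (intro conjI allI impI)
  show "injective_chromatic_index (sierpinski_adj C5_vertices C5_adj 1) = 3"
    using injective_chromatic_index_eqI[OF sierpinski_C5_1_injective_3_coloring]
      sierpinski_C5_1_no_injective_2_coloring by simp
  fix n :: nat assume "n \<ge> 2"
  then show "injective_chromatic_index (sierpinski_adj C5_vertices C5_adj n) = 4"
    using injective_chromatic_index_eqI[OF sierpinski_C5_injective_4_coloring]
      sierpinski_C5_no_injective_3_coloring by simp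
qed

end
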